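(* Let $S\subseteq\mathbb{N}^d$ be a generalised numerical semigroup. A gap $h\in\mathcal{H}(S)$ is Frobenius allowable if and only if $h$ is a maximal element of $\mathcal{H}(S)$ with respect to the natural partial order on $\mathbb{N}^d$.
   Context: $\mathbb{N}=\{0,1,2,\dots\}$. A generalised numerical semigroup (GNS) is a submonoid $S\subseteq\mathbb{N}^d$ (i.e. $0\in S$ and $S$ is closed under addition) whose complement $\mathcal{H}(S)=\mathbb{N}^d\setminus S$ is finite; elements of $\mathcal{H}(S)$ are called gaps. The natural partial order on $\mathbb{N}^d$ is $x\le y$ iff $x^{(i)}\le y^{(i)}$ for all $i$. A relaxed monomial order is a total order $\prec$ on $\mathbb{N}^d$ such that (i) if $v\prec w$ then $v\prec w+u$ for every $u\in\mathbb{N}^d$, and (ii) $0\prec v$ for every nonzero $v\in\mathbb{N}^d$. For such an order, $F_\prec(S)=\max_\prec \mathcal{H}(S)$. A gap $h$ is Frobenius allowable if $h=F_\prec(S)$ for some relaxed monomial order $\prec$. *)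

theory Defs
  imports "HOL-Analysis.Analysis"
begin

text \<open>Elements of N^d are represented as \<open>nat ^ 'd\<close> (d = CARD('d), arbitrary but fixed).\<close>

definition gaps :: "(nat ^ 'd) set \<Rightarrow> (nat ^ 'd) set" where
  "gaps S = UNIV - S"

definition is_gns :: "(nat ^ 'd) set \<Rightarrow> bool" where
  "is_gns S \<longleftrightarrow> 0 \<in> S \<and> (\<forall>x\<in>S. \<forall>y\<in>S. x + y \<in> S) \<and> finite (gaps S)"

definition nat_le :: "nat ^ 'd \<Rightarrow> nat ^ 'd \<Rightarrow> bool" where
  "nat_le x y \<longleftrightarrow> (\<forall>i. x $ i \<le> y $ i)"

text \<open>A relaxed monomial order, given by its strict part \<open>lt\<close> (a strict total order).\<close>
definition relaxed_monomial_order :: "(nat ^ 'd \<Rightarrow> nat ^ 'd \<Rightarrow> bool) \<Rightarrow> bool" where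
  "relaxed_monomial_order lt \<longleftrightarrow>
     (\<forall>x. \<not> lt x x) \<and>
     (\<forall>x y z. lt x y \<longrightarrow> lt y z \<longrightarrow> lt x z) \<and>
     (\<forall>x y. x \<noteq> y \<longrightarrow> lt x y \<or> lt y x) \<and>
     (\<forall>v w u. lt v w \<longrightarrow> lt v (w + u)) \<and>
     (\<forall>v. v \<noteq> 0 \<longrightarrow> lt 0 v)"

definition frobenius :: "(nat ^ 'd \<Rightarrow> nat ^ 'd \<Rightarrow> bool) \<Rightarrow> (nat ^ 'd) set \<Rightarrow> nat ^ 'd" where
  "frobenius lt S = (THE h. h \<in> gaps S \<and> (\<forall>g\<in>gaps S. g \<noteq> h \<longrightarrow> lt g h))"

definition frobenius_allowable :: "(nat ^ 'd) set \<Rightarrow> nat ^ 'd \<Rightarrow> bool" where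
  "frobenius_allowable S h \<longleftrightarrow>
     (\<exists>lt. relaxed_monomial_order lt \<and> h = frobenius lt S)"

definition nat_maximal_gap :: "(nat ^ 'd) set \<Rightarrow> nat ^ 'd \<Rightarrow> bool" where
  "nat_maximal_gap S h \<longleftrightarrow> h \<in> gaps S \<and> (\<forall>g\<in>gaps S. nat_le h g \<longrightarrow> g = h)"

end

theory Submission
  imports Defs
begin

text \<open>If \<open>h \<le> g\<close> componentwise then \<open>g = h + u\<close>, so condition (i) of a relaxed monomial
  order forbids \<open>g \<prec> h\<close>; hence the \<open>\<prec>\<close>-largest gap is maximal for the natural order.
  Conversely, for a maximal gap \<open>h\<close> compare elements first by whether they lie above \<open>h\<close>,
  then by total degree, and break the remaining ties by an arbitrary well-order. Every strict
  total order extending the natural order is a relaxed monomial order, and in this one every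
  other gap, not lying above \<open>h\<close>, is smaller than \<open>h\<close>.\<close>

definition strict_total_order :: "('a \<Rightarrow> 'a \<Rightarrow> bool) \<Rightarrow> bool" where
  "strict_total_order lt \<longleftrightarrow>
     (\<forall>x. \<not> lt x x) \<and>
     (\<forall>x y z. lt x y \<longrightarrow> lt y z \<longrightarrow> lt x z) \<and>
     (\<forall>x y. x \<noteq> y \<longrightarrow> lt x y \<or> lt y x)"

lemma strict_total_orderD:
  assumes "strict_total_order lt"
  shows "\<not> lt x x" "lt x y \<Longrightarrow> lt y z \<Longrightarrow> lt x z" "x \<noteq> y \<Longrightarrow> lt x y \<or> lt y x"
  using assms unfolding strict_total_order_def by blast+

lemma relaxed_monomial_order_iff:
  "relaxed_monomial_order lt \<longleftrightarrow>
     strict_total_order lt \<and> (\<forall>v w u. lt v w \<longrightarrow> lt v (w + u)) \<and> (\<forall>v. v \<noteq> 0 \<longrightarrow> lt 0 v)"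
  unfolding relaxed_monomial_order_def strict_total_order_def by (simp only: conj_assoc)

lemma ex_strict_total_order: "\<exists>lt :: 'a \<Rightarrow> 'a \<Rightarrow> bool. strict_total_order lt"
proof -
  obtain r :: "'a rel" where "well_order_on UNIV r"
    using well_order_on by blast
  then have "trans r" "antisym r" "total_on UNIV r"
    unfolding well_order_on_def linear_order_on_def partial_order_on_def preorder_on_def
    by auto
  then have "strict_total_order (\<lambda>x y. (x, y) \<in> r \<and> x \<noteq> y)"
    unfolding strict_total_order_def trans_def antisym_def total_on_def by blast
  then show ?thesis by blast
qed

definition key_lex :: "('a \<Rightarrow> 'b::linorder) \<Rightarrow> ('a \<Rightarrow> 'a \<Rightarrow> bool) \<Rightarrow> 'a \<Rightarrow> 'a \<Rightarrow> bool" where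
  "key_lex k lt x y \<longleftrightarrow> k x < k y \<or> (k x = k y \<and> lt x y)"

lemma strict_total_order_key_lex:
  assumes "strict_total_order lt"
  shows "strict_total_order (key_lex k lt)"
  unfolding strict_total_order_def key_lex_def
proof (intro conjI allI impI)
  show "\<not> (k x < k x \<or> k x = k x \<and> lt x x)" for x
    using strict_total_orderD(1)[OF assms] by simp
  show "k x < k z \<or> k x = k z \<and> lt x z"
    if "k x < k y \<or> k x = k y \<and> lt x y" "k y < k z \<or> k y = k z \<and> lt y z" for x y z
    using that strict_total_orderD(2)[OF assms, of x y z] less_trans by auto
  show "(k x < k y \<or> k x = k y \<and> lt x y) \<or> (k y < k x \<or> k y = k x \<and> lt y x)"
    if "x \<noteq> y" for x y
    using that strict_total_orderD(3)[OF assms, of x y] by auto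
qed

lemma strict_total_order_max:
  assumes "strict_total_order lt" "finite A" "A \<noteq> {}"
  shows "\<exists>m\<in>A. \<forall>g\<in>A. g \<noteq> m \<longrightarrow> lt g m"
  using assms(2,3)
proof (induction A rule: finite_ne_induct)
  case (singleton x)
  then show ?case by auto
next
  case (insert x F)
  then obtain m where m: "m \<in> F" "\<forall>g\<in>F. g \<noteq> m \<longrightarrow> lt g m"
    by blast
  show ?case
  proof (cases "lt m x")
    case True
    then have "\<forall>g\<in>insert x F. g \<noteq> x \<longrightarrow> lt g x"
      using m strict_total_orderD(2)[OF assms(1), of _ m x] by auto
    then show ?thesis by blast
  next
    case False
    then have "lt x m"
      using m \<open>x \<notin> F\<close> strict_total_orderD(3)[OF assms(1), of x m] by auto
    with m show ?thesis by blast
  qed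
qed

lemma frobenius_eqI:
  assumes "strict_total_order lt" "m \<in> gaps S" "\<forall>g\<in>gaps S. g \<noteq> m \<longrightarrow> lt g m"
  shows "frobenius lt S = m"
  unfolding frobenius_def
proof (rule the_equality)
  show "m \<in> gaps S \<and> (\<forall>g\<in>gaps S. g \<noteq> m \<longrightarrow> lt g m)"
    using assms(2,3) ..
  show "h = m" if "h \<in> gaps S \<and> (\<forall>g\<in>gaps S. g \<noteq> h \<longrightarrow> lt g h)" for h
    using that assms(2,3) strict_total_orderD[OF assms(1)] by metis
qed

lemma frobenius_is_max:
  assumes "strict_total_order lt" "finite (gaps S)" "gaps S \<noteq> {}"
  shows "frobenius lt S \<in> gaps S" "\<forall>g\<in>gaps S. g \<noteq> frobenius lt S \<longrightarrow> lt g (frobenius lt S)"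
proof -
  obtain m where "m \<in> gaps S" "\<forall>g\<in>gaps S. g \<noteq> m \<longrightarrow> lt g m"
    using strict_total_order_max[OF assms] by blast
  with frobenius_eqI[OF assms(1)] show
    "frobenius lt S \<in> gaps S" "\<forall>g\<in>gaps S. g \<noteq> frobenius lt S \<longrightarrow> lt g (frobenius lt S)"
    by simp_all
qed

lemma nat_le_iff_exists_add: "nat_le x y \<longleftrightarrow> (\<exists>u. y = x + u)"
proof
  assume "nat_le x y"
  then have "y = x + (y - x)"
    unfolding nat_le_def by (simp add: vec_eq_iff)
  then show "\<exists>u. y = x + u" ..
qed (auto simp: nat_le_def)

lemma relaxed_monomial_order_not_less_of_nat_le:
  assumes "relaxed_monomial_order lt" "nat_le h g"
  shows "\<not> lt g h"
proof
  assume "lt g h"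
  have "strict_total_order lt" and mono: "\<And>v w u. lt v w \<Longrightarrow> lt v (w + u)"
    using assms(1) unfolding relaxed_monomial_order_iff by simp_all
  obtain u where "g = h + u"
    using assms(2) nat_le_iff_exists_add by blast
  with mono[OF \<open>lt g h\<close>] have "lt g g"
    by simp
  with strict_total_orderD(1)[OF \<open>strict_total_order lt\<close>] show False ..
qed

lemma frobenius_nat_maximal_gap:
  assumes "relaxed_monomial_order lt" "finite (gaps S)" "gaps S \<noteq> {}"
  shows "nat_maximal_gap S (frobenius lt S)"
proof -
  have sto: "strict_total_order lt"
    using assms(1) relaxed_monomial_order_iff by blast
  show ?thesis
    unfolding nat_maximal_gap_def
    using frobenius_is_max[OF sto assms(2,3)]
      relaxed_monomial_order_not_less_of_nat_le[OF assms(1)]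
    by blast
qed

lemma relaxed_monomial_order_if_extends_nat_le:
  fixes lt :: "nat ^ 'd \<Rightarrow> nat ^ 'd \<Rightarrow> bool"
  assumes "strict_total_order lt" and ext: "\<And>x y. nat_le x y \<Longrightarrow> x \<noteq> y \<Longrightarrow> lt x y"
  shows "relaxed_monomial_order lt"
  unfolding relaxed_monomial_order_iff
proof (intro conjI allI impI)
  show "strict_total_order lt" by fact
  show "lt v (w + u)" if "lt v w" for v w u
  proof (cases "u = 0")
    case False
    then have "lt w (w + u)"
      using ext nat_le_iff_exists_add by (metis add_cancel_right_right)
    with \<open>lt v w\<close> show ?thesis
      using strict_total_orderD(2)[OF assms(1)] by blast
  qed (use that in simp)
  show "lt 0 v" if "v \<noteq> 0" for v
    using ext[of 0 v] that by (simp add: nat_le_def)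
qed

lemma degree_less_of_nat_le:
  fixes x y :: "nat ^ 'd"
  assumes "nat_le x y" "x \<noteq> y"
  shows "(\<Sum>i\<in>UNIV. x $ i) < (\<Sum>i\<in>UNIV. y $ i)"
proof -
  obtain i where "x $ i \<noteq> y $ i"
    using assms(2) by (auto simp: vec_eq_iff)
  with assms(1) have "x $ i < y $ i"
    unfolding nat_le_def by (metis le_neq_implies_less)
  with assms(1) show ?thesis
    by (intro sum_strict_mono_ex1) (auto simp: nat_le_def)
qed

lemma ex_relaxed_monomial_order_below:
  fixes h :: "nat ^ 'd"
  shows "\<exists>lt. relaxed_monomial_order lt \<and> (\<forall>g. \<not> nat_le h g \<longrightarrow> lt g h)"
proof -
  obtain L :: "nat ^ 'd \<Rightarrow> nat ^ 'd \<Rightarrow> bool" where L: "strict_total_order L"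
    using ex_strict_total_order by blast
  define above :: "nat ^ 'd \<Rightarrow> bool" where "above x \<longleftrightarrow> nat_le h x" for x
  define degree :: "nat ^ 'd \<Rightarrow> nat" where "degree x = (\<Sum>i\<in>UNIV. x $ i)" for x
  define lt where "lt = key_lex above (key_lex degree L)"
  have "relaxed_monomial_order lt"
  proof (rule relaxed_monomial_order_if_extends_nat_le)
    show "strict_total_order lt"
      unfolding lt_def by (intro strict_total_order_key_lex L)
    show "lt x y" if "nat_le x y" "x \<noteq> y" for x y
    proof -
      have "above x \<le> above y"
        using that(1) unfolding above_def nat_le_def by (auto intro: le_trans)
      moreover have "degree x < degree y"
        unfolding degree_def using degree_less_of_nat_le[OF that] .
      ultimately show ?thesis
        unfolding lt_def key_lex_def by auto
    qed
  qed
  moreover have "lt g h" if "\<not> nat_le h g" for g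
  proof -
    have "above h"
      unfolding above_def nat_le_def by simp
    with that show ?thesis
      unfolding lt_def key_lex_def above_def by simp
  qed
  ultimately show ?thesis by blast
qed

theorem theorem2p1:
  fixes S :: "(nat ^ 'd) set" and h :: "nat ^ 'd"
  assumes "is_gns S" and "h \<in> gaps S"
  shows "frobenius_allowable S h \<longleftrightarrow> nat_maximal_gap S h"
proof
  assume "frobenius_allowable S h"
  then obtain lt where "relaxed_monomial_order lt" "h = frobenius lt S"
    unfolding frobenius_allowable_def by blast
  moreover have "finite (gaps S)" "gaps S \<noteq> {}"
    using assms unfolding is_gns_def by auto
  ultimately show "nat_maximal_gap S h"
    using frobenius_nat_maximal_gap by blast
next
  assume maximal: "nat_maximal_gap S h"
  obtain lt where lt: "relaxed_monomial_order lt" and below: "\<forall>g. \<not> nat_le h g \<longrightarrow> lt g h"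
    using ex_relaxed_monomial_order_below by blast
  have "\<forall>g\<in>gaps S. g \<noteq> h \<longrightarrow> lt g h"
    using maximal below unfolding nat_maximal_gap_def by blast
  then have "frobenius lt S = h"
    using frobenius_eqI lt assms(2) relaxed_monomial_order_iff by blast
  with lt show "frobenius_allowable S h"
    unfolding frobenius_allowable_def by metis
qed

end
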